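(* Assume $G$ is strongly connected and $r=1$ (neutral drift). Let $C\subseteq V$ and $t\ge 0$. If $P_{i,t|C}=P_{k,t|C}$ for all $i,k\in V$, then $P_{i,t|C}=F_C$ for all $i\in V$.
   Context: Let $G=(V,E)$ be a finite directed graph with $N=|V|$ vertices and a weight matrix $W=[w_{ij}]$ with $w_{ij}\ge 0$, $w_{ij}>0$ iff $(i,j)\in E$, and $\sum_j w_{ij}=1$ for every $i$. A configuration is a subset of $V$ (its elements are mutants, all other vertices residents). In the neutral-drift birth–death (Moran) process on $G$ started from configuration $C$ at time $0$, at each time step a vertex $i$ is selected uniformly at random (probability $1/N$), then a vertex $j$ is chosen with probability $w_{ij}$ and $j$ takes the type of $i$. $P_{i,t|C}$ is the probability that vertex $i$ is a mutant at time $t$; $P_{V,t|C}$ is the probability that all vertices are mutants at time $t$; the fixation probability is $F_C=\lim_{t\to\infty}P_{V,t|C}$. *)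

theory Defs
  imports Complex_Main
begin

definition weight_matrix :: "'v set \<Rightarrow> ('v \<Rightarrow> 'v \<Rightarrow> real) \<Rightarrow> bool" where
  "weight_matrix V W \<longleftrightarrow> finite V \<and> (\<forall>i\<in>V. \<forall>j\<in>V. W i j \<ge> 0)
      \<and> (\<forall>i\<in>V. (\<Sum>j\<in>V. W i j) = 1)"

definition edges :: "'v set \<Rightarrow> ('v \<Rightarrow> 'v \<Rightarrow> real) \<Rightarrow> ('v \<times> 'v) set" where
  "edges V W = {(i,j). i \<in> V \<and> j \<in> V \<and> W i j > 0}"

definition strongly_connected :: "'v set \<Rightarrow> ('v \<Rightarrow> 'v \<Rightarrow> real) \<Rightarrow> bool" where
  "strongly_connected V W \<longleftrightarrow> (\<forall>i\<in>V. \<forall>j\<in>V. (i, j) \<in> (edges V W)\<^sup>*)"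

text \<open>Result of vertex i reproducing onto vertex j: j takes the type of i.\<close>
definition update :: "'v set \<Rightarrow> 'v \<Rightarrow> 'v \<Rightarrow> 'v set" where
  "update A i j = (if i \<in> A then insert j A else A - {j})"

text \<open>One-step transition probability of the neutral (r = 1) birth-death Moran process.\<close>
definition moran_trans :: "'v set \<Rightarrow> ('v \<Rightarrow> 'v \<Rightarrow> real) \<Rightarrow> 'v set \<Rightarrow> 'v set \<Rightarrow> real" where
  "moran_trans V W A B =
     (\<Sum>i\<in>V. \<Sum>j\<in>V. (1 / real (card V)) * W i j * (if update A i j = B then 1 else 0))"

fun moran_dist :: "'v set \<Rightarrow> ('v \<Rightarrow> 'v \<Rightarrow> real) \<Rightarrow> 'v set \<Rightarrow> nat \<Rightarrow> 'v set \<Rightarrow> real" where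
  "moran_dist V W C 0 B = (if B = C then 1 else 0)"
| "moran_dist V W C (Suc t) B = (\<Sum>A\<in>Pow V. moran_dist V W C t A * moran_trans V W A B)"

text \<open>P_{i,t|C}: probability that vertex i is a mutant at time t.\<close>
definition P_vertex :: "'v set \<Rightarrow> ('v \<Rightarrow> 'v \<Rightarrow> real) \<Rightarrow> 'v \<Rightarrow> nat \<Rightarrow> 'v set \<Rightarrow> real" where
  "P_vertex V W i t C = (\<Sum>A\<in>{A\<in>Pow V. i \<in> A}. moran_dist V W C t A)"

definition P_all :: "'v set \<Rightarrow> ('v \<Rightarrow> 'v \<Rightarrow> real) \<Rightarrow> nat \<Rightarrow> 'v set \<Rightarrow> real" where
  "P_all V W t C = moran_dist V W C t V"

definition fixation_prob :: "'v set \<Rightarrow> ('v \<Rightarrow> 'v \<Rightarrow> real) \<Rightarrow> 'v set \<Rightarrow> real" where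
  "fixation_prob V W C = lim (\<lambda>t. P_all V W t C)"

end

theory Submission
  imports Defs
begin

text \<open>
  Under neutral drift each marginal obeys
  \<open>P\<^sub>j(s+1) = P\<^sub>j(s) + (1/N) \<Sum>\<^sub>i w\<^sub>i\<^sub>j (P\<^sub>i(s) - P\<^sub>j(s))\<close>,
  so marginals that agree at time \<open>t\<close> stay constant from then on. Moreover
  \<open>P\<^sub>V(s) \<le> P\<^sub>i(s) \<le> P\<^sub>V(s) + T(s)\<close>, where \<open>T(s)\<close> is the probability of a configuration
  other than \<open>{}\<close> and \<open>V\<close>. On a strongly connected graph every such configuration
  reaches \<open>V\<close> within \<open>N\<close> steps with probability at least \<open>\<delta>\<^sup>N\<close> (\<open>\<delta>\<close> the least
  single-step probability of spreading along an edge), so \<open>T\<close> decays geometrically and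
  \<open>P\<^sub>V(s)\<close> converges to the common value of the marginals.
\<close>

lemma rtrancl_exit_edge:
  "(a, b) \<in> R\<^sup>* \<Longrightarrow> a \<in> A \<Longrightarrow> b \<notin> A \<Longrightarrow> \<exists>i j. i \<in> A \<and> j \<notin> A \<and> (i, j) \<in> R"
  by (induction rule: rtrancl_induct) blast+

lemma moran_trans_alt_def:
  "moran_trans V W A B = (\<Sum>i\<in>V. \<Sum>j\<in>V. W i j * of_bool (update A i j = B)) / real (card V)"
  unfolding moran_trans_def sum_divide_distrib by (intro sum.cong refl) simp

locale moran =
  fixes V :: "'v set" and W :: "'v \<Rightarrow> 'v \<Rightarrow> real"
  assumes weight_matrix: "weight_matrix V W" and nonempty: "V \<noteq> {}"
begin

lemma finite_V: "finite V"
  using weight_matrix by (simp add: weight_matrix_def)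

lemma card_V_pos: "card V > 0"
  using finite_V nonempty by (simp add: card_gt_0_iff)

lemma W_nonneg: "i \<in> V \<Longrightarrow> j \<in> V \<Longrightarrow> W i j \<ge> 0"
  using weight_matrix by (simp add: weight_matrix_def)

lemma W_row_sum: "i \<in> V \<Longrightarrow> (\<Sum>j\<in>V. W i j) = 1"
  using weight_matrix by (simp add: weight_matrix_def)

lemma W_total_sum: "(\<Sum>i\<in>V. \<Sum>j\<in>V. W i j) = real (card V)"
  by (simp add: W_row_sum)

lemma update_subset: "A \<subseteq> V \<Longrightarrow> j \<in> V \<Longrightarrow> update A i j \<subseteq> V"
  by (auto simp: update_def)

lemma mem_update: "x \<in> update A i j \<longleftrightarrow> (if x = j then i \<in> A else x \<in> A)"
  by (auto simp: update_def)

lemma moran_trans_nonneg: "moran_trans V W A B \<ge> 0"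
  unfolding moran_trans_def by (intro sum_nonneg) (auto simp: W_nonneg)

lemma moran_trans_eq_0: "A \<subseteq> V \<Longrightarrow> \<not> B \<subseteq> V \<Longrightarrow> moran_trans V W A B = 0"
  unfolding moran_trans_def by (intro sum.neutral ballI) (auto dest: update_subset[of A])

lemma moran_trans_expectation:
  assumes "A \<subseteq> V"
  shows "(\<Sum>B\<in>Pow V. moran_trans V W A B * f B)
           = (\<Sum>i\<in>V. \<Sum>j\<in>V. W i j * f (update A i j)) / real (card V)"
proof -
  have "(\<Sum>B\<in>Pow V. moran_trans V W A B * f B)
      = (\<Sum>i\<in>V. \<Sum>j\<in>V. \<Sum>B\<in>Pow V. W i j / real (card V) * (if update A i j = B then f B else 0))"
    unfolding moran_trans_def sum_distrib_right
    by (subst sum.swap, intro sum.cong refl, subst sum.swap, intro sum.cong refl) simp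
  also have "\<dots> = (\<Sum>i\<in>V. \<Sum>j\<in>V. W i j / real (card V) * f (update A i j))"
  proof (intro sum.cong refl)
    fix i j assume "j \<in> V"
    then have "update A i j \<in> Pow V"
      using assms update_subset by blast
    then show "(\<Sum>B\<in>Pow V. W i j / real (card V) * (if update A i j = B then f B else 0))
        = W i j / real (card V) * f (update A i j)"
      using finite_V by (subst sum_distrib_left[symmetric]) (simp add: sum.delta)
  qed
  finally show ?thesis
    by (simp add: sum_divide_distrib)
qed

lemma moran_trans_sum: "A \<subseteq> V \<Longrightarrow> (\<Sum>B\<in>Pow V. moran_trans V W A B) = 1"
  using moran_trans_expectation[of A "\<lambda>_. 1"] W_total_sum card_V_pos by simp

lemma moran_trans_absorbing:
  assumes "A = {} \<or> A = V"
  shows "moran_trans V W A A = 1"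
proof -
  have "\<And>i j. i \<in> V \<Longrightarrow> j \<in> V \<Longrightarrow> update A i j = A"
    using assms by (auto simp: update_def)
  then show ?thesis
    using W_total_sum card_V_pos by (simp add: moran_trans_alt_def)
qed

lemma moran_dist_nonneg: "moran_dist V W C n B \<ge> 0"
  by (induction n arbitrary: B) (auto intro!: sum_nonneg mult_nonneg_nonneg moran_trans_nonneg)

lemma moran_dist_eq_0: "C \<subseteq> V \<Longrightarrow> \<not> B \<subseteq> V \<Longrightarrow> moran_dist V W C n B = 0"
  by (induction n arbitrary: B) (auto intro!: sum.neutral simp: moran_trans_eq_0)

lemma moran_dist_sum: "C \<subseteq> V \<Longrightarrow> (\<Sum>B\<in>Pow V. moran_dist V W C n B) = 1"
proof (induction n)
  case 0
  then show ?case
    using finite_V by (simp add: sum.delta)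
next
  case (Suc n)
  have "(\<Sum>B\<in>Pow V. moran_dist V W C (Suc n) B)
      = (\<Sum>A\<in>Pow V. moran_dist V W C n A * (\<Sum>B\<in>Pow V. moran_trans V W A B))"
    by (simp add: sum_distrib_left sum_distrib_right mult.assoc) (rule sum.swap)
  also have "\<dots> = (\<Sum>A\<in>Pow V. moran_dist V W C n A)"
    by (simp add: moran_trans_sum)
  finally show ?case
    using Suc by simp
qed

lemma moran_dist_add:
  assumes C: "C \<subseteq> V"
  shows "moran_dist V W C (s + n) B = (\<Sum>A\<in>Pow V. moran_dist V W C s A * moran_dist V W A n B)"
proof (induction n arbitrary: B)
  case 0
  show ?case
  proof (cases "B \<subseteq> V")
    case True
    then show ?thesis
      using finite_V by (simp add: if_distrib sum.delta' cong: if_cong)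
  next
    case False
    then show ?thesis
      using C moran_dist_eq_0[of C B s] by (auto intro!: sum.neutral)
  qed
next
  case (Suc n)
  have "moran_dist V W C (s + Suc n) B
      = (\<Sum>A'\<in>Pow V. \<Sum>A\<in>Pow V. moran_dist V W C s A * moran_dist V W A n A' * moran_trans V W A' B)"
    using Suc by (simp add: sum_distrib_right)
  also have "\<dots> = (\<Sum>A\<in>Pow V. \<Sum>A'\<in>Pow V. moran_dist V W C s A * moran_dist V W A n A' * moran_trans V W A' B)"
    by (rule sum.swap)
  finally show ?case
    by (simp add: sum_distrib_left mult.assoc)
qed

lemma moran_dist_1:
  assumes "A \<subseteq> V"
  shows "moran_dist V W A 1 B = moran_trans V W A B"
proof -
  have "moran_dist V W A 1 B = (\<Sum>A'\<in>Pow V. if A' = A then moran_trans V W A' B else 0)"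
    by (simp, intro sum.cong) auto
  also have "\<dots> = moran_trans V W A B"
    using assms finite_V by (simp add: sum.delta')
  finally show ?thesis .
qed

lemma moran_dist_le_1: "C \<subseteq> V \<Longrightarrow> moran_dist V W C n B \<le> 1"
proof (cases "B \<subseteq> V")
  case True
  assume C: "C \<subseteq> V"
  have "moran_dist V W C n B \<le> (\<Sum>B'\<in>Pow V. moran_dist V W C n B')"
    using True finite_V by (intro member_le_sum) (auto simp: moran_dist_nonneg)
  then show ?thesis
    using moran_dist_sum[OF C] by simp
qed (simp add: moran_dist_eq_0)

lemma moran_dist_Suc_ge:
  "A \<subseteq> V \<Longrightarrow> moran_dist V W C n A * moran_trans V W A B \<le> moran_dist V W C (Suc n) B"
  using finite_V
  by (simp, intro member_le_sum) (auto intro!: mult_nonneg_nonneg moran_dist_nonneg moran_trans_nonneg)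

lemma moran_dist_absorbing:
  assumes A: "A = {} \<or> A = V"
  shows "moran_dist V W A n A = 1"
proof (rule antisym)
  show "moran_dist V W A n A \<le> 1"
    using A by (intro moran_dist_le_1) auto
  show "1 \<le> moran_dist V W A n A"
  proof (induction n)
    case (Suc n)
    then show ?case
      using moran_dist_Suc_ge[of A A n A] moran_trans_absorbing[OF A] A by auto
  qed simp
qed

definition transient :: "'v set set" where
  "transient = Pow V - {{}, V}"

definition transient_mass :: "'v set \<Rightarrow> nat \<Rightarrow> real" where
  "transient_mass C s = (\<Sum>B\<in>transient. moran_dist V W C s B)"

lemma transient_mass_nonneg: "transient_mass C s \<ge> 0"
  unfolding transient_mass_def by (intro sum_nonneg moran_dist_nonneg)

lemma transient_mass_le_1:
  assumes "C \<subseteq> V"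
  shows "transient_mass C s \<le> 1"
proof -
  have "transient_mass C s \<le> (\<Sum>B\<in>Pow V. moran_dist V W C s B)"
    unfolding transient_mass_def transient_def
    using finite_V by (intro sum_mono2) (auto simp: moran_dist_nonneg)
  then show ?thesis
    using moran_dist_sum[OF assms] by simp
qed

lemma transient_mass_absorbing:
  assumes A: "A = {} \<or> A = V"
  shows "transient_mass A n = 0"
proof -
  have "transient_mass A n \<le> (\<Sum>B\<in>Pow V - {A}. moran_dist V W A n B)"
    unfolding transient_mass_def transient_def
    using A finite_V by (intro sum_mono2) (auto simp: moran_dist_nonneg)
  also have "\<dots> = 0"
    using A finite_V moran_dist_sum[of A n] moran_dist_absorbing[OF A] by (auto simp: sum_diff1)
  finally show ?thesis
    using transient_mass_nonneg[of A n] by simp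
qed

lemma transient_mass_add:
  assumes "C \<subseteq> V"
  shows "transient_mass C (s + n) = (\<Sum>A\<in>Pow V. moran_dist V W C s A * transient_mass A n)"
  unfolding transient_mass_def moran_dist_add[OF assms] sum_distrib_left
  by (rule sum.swap)

lemma transient_mass_add_le:
  assumes C: "C \<subseteq> V" and bound: "\<And>A. A \<in> transient \<Longrightarrow> transient_mass A n \<le> c"
  shows "transient_mass C (s + n) \<le> c * transient_mass C s"
proof -
  have "transient_mass C (s + n) \<le> (\<Sum>A\<in>Pow V. if A \<in> transient then c * moran_dist V W C s A else 0)"
    unfolding transient_mass_add[OF C]
  proof (rule sum_mono)
    fix A assume "A \<in> Pow V"
    show "moran_dist V W C s A * transient_mass A n \<le> (if A \<in> transient then c * moran_dist V W C s A else 0)"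
    proof (cases "A \<in> transient")
      case True
      then show ?thesis
        using bound mult_left_mono[OF _ moran_dist_nonneg] by (simp add: mult.commute)
    next
      case False
      with \<open>A \<in> Pow V\<close> have "A = {} \<or> A = V"
        by (auto simp: transient_def)
      with False show ?thesis
        by (simp add: transient_mass_absorbing)
    qed
  qed
  also have "\<dots> = (\<Sum>A\<in>Pow V \<inter> transient. c * moran_dist V W C s A)"
    using finite_V by (simp add: sum.inter_restrict)
  also have "Pow V \<inter> transient = transient"
    by (auto simp: transient_def)
  finally show ?thesis
    by (simp add: transient_mass_def sum_distrib_left)
qed

lemma transient_mass_Suc_le: "C \<subseteq> V \<Longrightarrow> transient_mass C (Suc s) \<le> transient_mass C s"
  using transient_mass_add_le[of C 1 1 s] transient_mass_le_1 by (auto simp: transient_def)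

lemma P_vertex_eq_expectation:
  "P_vertex V W v s C = (\<Sum>A\<in>Pow V. moran_dist V W C s A * of_bool (v \<in> A))"
proof -
  have "finite (Pow V)"
    using finite_V by simp
  then show ?thesis
    unfolding P_vertex_def sum.inter_filter[OF \<open>finite (Pow V)\<close>] by (intro sum.cong) auto
qed

lemma update_indicator_sum:
  assumes j: "j \<in> V"
  shows "(\<Sum>i\<in>V. \<Sum>k\<in>V. W i k * of_bool (j \<in> update A i k))
           = real (card V) * of_bool (j \<in> A) + (\<Sum>i\<in>V. W i j * (of_bool (i \<in> A) - of_bool (j \<in> A)))"
proof -
  have row: "(\<Sum>k\<in>V. W i k * of_bool (j \<in> update A i k))
               = of_bool (j \<in> A) + W i j * (of_bool (i \<in> A) - of_bool (j \<in> A))" if i: "i \<in> V" for i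
  proof -
    have "(\<Sum>k\<in>V. W i k * of_bool (j \<in> update A i k))
        = (\<Sum>k\<in>V. W i k * of_bool (j \<in> A) + (if k = j then W i j * (of_bool (i \<in> A) - of_bool (j \<in> A)) else 0))"
      by (intro sum.cong refl) (auto simp: mem_update)
    also have "\<dots> = (\<Sum>k\<in>V. W i k) * of_bool (j \<in> A) + W i j * (of_bool (i \<in> A) - of_bool (j \<in> A))"
      using j finite_V by (simp add: sum.distrib sum_distrib_right sum.delta')
    finally show ?thesis
      using W_row_sum[OF i] by simp
  qed
  then show ?thesis
    by (simp add: sum.distrib)
qed

lemma P_vertex_Suc:
  assumes j: "j \<in> V"
  shows "P_vertex V W j (Suc s) C
           = P_vertex V W j s C + (\<Sum>i\<in>V. W i j * (P_vertex V W i s C - P_vertex V W j s C)) / real (card V)"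
proof -
  let ?D = "moran_dist V W C s"
  let ?x = "\<lambda>v A. of_bool (v \<in> A) :: real"
  have "P_vertex V W j (Suc s) C = (\<Sum>A\<in>Pow V. ?D A * (\<Sum>B\<in>Pow V. moran_trans V W A B * ?x j B))"
    unfolding P_vertex_eq_expectation moran_dist.simps(2) sum_distrib_right sum_distrib_left
    by (subst sum.swap) (simp add: mult.assoc)
  also have "\<dots> = (\<Sum>A\<in>Pow V. ?D A * ?x j A + (\<Sum>i\<in>V. W i j * (?D A * ?x i A - ?D A * ?x j A)) / real (card V))"
  proof (intro sum.cong refl)
    fix A assume "A \<in> Pow V"
    then have "(\<Sum>B\<in>Pow V. moran_trans V W A B * ?x j B)
        = (real (card V) * ?x j A + (\<Sum>i\<in>V. W i j * (?x i A - ?x j A))) / real (card V)"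
      by (simp add: moran_trans_expectation update_indicator_sum[OF j])
    moreover have "(\<Sum>i\<in>V. W i j * (?D A * ?x i A - ?D A * ?x j A))
        = ?D A * (\<Sum>i\<in>V. W i j * (?x i A - ?x j A))"
      by (simp add: sum_distrib_left algebra_simps)
    ultimately show "?D A * (\<Sum>B\<in>Pow V. moran_trans V W A B * ?x j B)
        = ?D A * ?x j A + (\<Sum>i\<in>V. W i j * (?D A * ?x i A - ?D A * ?x j A)) / real (card V)"
      using card_V_pos by (simp only:) (simp add: add_divide_distrib distrib_left)
  qed
  also have "\<dots> = (\<Sum>A\<in>Pow V. ?D A * ?x j A)
      + (\<Sum>A\<in>Pow V. \<Sum>i\<in>V. W i j * (?D A * ?x i A - ?D A * ?x j A)) / real (card V)"
    by (simp add: sum.distrib sum_divide_distrib)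
  also have "(\<Sum>A\<in>Pow V. \<Sum>i\<in>V. W i j * (?D A * ?x i A - ?D A * ?x j A))
      = (\<Sum>i\<in>V. W i j * ((\<Sum>A\<in>Pow V. ?D A * ?x i A) - (\<Sum>A\<in>Pow V. ?D A * ?x j A)))"
    by (subst sum.swap) (simp add: sum_distrib_left sum_subtractf[symmetric])
  finally show ?thesis
    by (simp only: P_vertex_eq_expectation)
qed

lemma P_vertex_Suc_eq_if_uniform:
  assumes uniform: "\<forall>i\<in>V. \<forall>k\<in>V. P_vertex V W i s C = P_vertex V W k s C" and j: "j \<in> V"
  shows "P_vertex V W j (Suc s) C = P_vertex V W j s C"
proof -
  have "W i j * (P_vertex V W i s C - P_vertex V W j s C) = 0" if "i \<in> V" for i
  proof -
    from uniform that j have "P_vertex V W i s C = P_vertex V W j s C"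
      by blast
    then show ?thesis
      by simp
  qed
  then have "(\<Sum>i\<in>V. W i j * (P_vertex V W i s C - P_vertex V W j s C)) = 0"
    by (intro sum.neutral) blast
  then show ?thesis
    using P_vertex_Suc[OF j, of s C] by simp
qed

lemma P_vertex_add_eq_if_uniform:
  assumes uniform: "\<forall>i\<in>V. \<forall>k\<in>V. P_vertex V W i t C = P_vertex V W k t C" and j: "j \<in> V"
  shows "P_vertex V W j (t + m) C = P_vertex V W j t C"
  using j
proof (induction m arbitrary: j)
  case (Suc m)
  have "\<forall>i\<in>V. \<forall>k\<in>V. P_vertex V W i (t + m) C = P_vertex V W k (t + m) C"
  proof (intro ballI)
    fix i k assume "i \<in> V" "k \<in> V"
    with Suc.IH uniform show "P_vertex V W i (t + m) C = P_vertex V W k (t + m) C"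
      by metis
  qed
  from P_vertex_Suc_eq_if_uniform[OF this Suc.prems] Suc.IH[OF Suc.prems] show ?case
    by simp
qed simp

lemma P_all_le_P_vertex: "i \<in> V \<Longrightarrow> P_all V W s C \<le> P_vertex V W i s C"
  unfolding P_all_def P_vertex_def
  using finite_V by (intro member_le_sum) (auto simp: moran_dist_nonneg)

lemma P_vertex_le_P_all_plus_transient_mass:
  "P_vertex V W i s C \<le> P_all V W s C + transient_mass C s"
proof -
  have "P_vertex V W i s C \<le> (\<Sum>B\<in>insert V transient. moran_dist V W C s B)"
    unfolding P_vertex_def transient_def
    using finite_V by (intro sum_mono2) (auto simp: moran_dist_nonneg)
  also have "\<dots> = P_all V W s C + transient_mass C s"
    using finite_V by (simp add: P_all_def transient_mass_def transient_def)
  finally show ?thesis .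
qed

lemma moran_trans_insert_ge:
  assumes ij: "(i, j) \<in> edges V W" and "i \<in> A"
  shows "W i j / real (card V) \<le> moran_trans V W A (insert j A)"
proof -
  have i: "i \<in> V" and j: "j \<in> V"
    using ij by (auto simp: edges_def)
  let ?g = "\<lambda>a b. W a b * of_bool (update A a b = insert j A)"
  have g_nonneg: "a \<in> V \<Longrightarrow> b \<in> V \<Longrightarrow> ?g a b \<ge> 0" for a b
    by (simp add: W_nonneg)
  have "W i j = ?g i j"
    using \<open>i \<in> A\<close> by (simp add: update_def)
  also have "\<dots> \<le> (\<Sum>b\<in>V. ?g i b)"
    using j finite_V g_nonneg i by (intro member_le_sum) auto
  also have "\<dots> \<le> (\<Sum>a\<in>V. \<Sum>b\<in>V. ?g a b)"
    using i finite_V g_nonneg by (intro member_le_sum sum_nonneg) auto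
  finally show ?thesis
    using card_V_pos by (simp add: moran_trans_alt_def divide_right_mono)
qed

text \<open>Inserting 1 keeps the minimum well defined when there are no edges.\<close>

definition min_step_prob :: real where
  "min_step_prob = Min (insert 1 ((\<lambda>(i, j). W i j / real (card V)) ` edges V W))"

lemma finite_edges: "finite (edges V W)"
  by (rule finite_subset[of _ "V \<times> V"]) (auto simp: edges_def finite_V)

lemma min_step_prob_pos: "min_step_prob > 0"
  unfolding min_step_prob_def using finite_edges card_V_pos by (auto simp: edges_def)

lemma min_step_prob_le_1: "min_step_prob \<le> 1"
  unfolding min_step_prob_def using finite_edges by auto

lemma min_step_prob_le_moran_trans:
  assumes "(i, j) \<in> edges V W" "i \<in> A"
  shows "min_step_prob \<le> moran_trans V W A (insert j A)"
proof -
  have "min_step_prob \<le> W i j / real (card V)"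
    unfolding min_step_prob_def using finite_edges assms(1) by (intro Min_le) auto
  also have "\<dots> \<le> moran_trans V W A (insert j A)"
    by (rule moran_trans_insert_ge[OF assms])
  finally show ?thesis .
qed

end

locale strongly_connected_moran = moran +
  assumes strongly_connected: "strongly_connected V W"
begin

lemma moran_dist_reach_V:
  assumes "A \<subseteq> V" "A \<noteq> {}" "card (V - A) \<le> n"
  shows "min_step_prob ^ n \<le> moran_dist V W A n V"
  using assms
proof (induction n arbitrary: A)
  case 0
  then have "A = V"
    using finite_V by auto
  then show ?case
    using moran_dist_absorbing[of V 0] by simp
next
  case (Suc n)
  show ?case
  proof (cases "A = V")
    case True
    have "min_step_prob ^ Suc n \<le> 1"
      using min_step_prob_pos min_step_prob_le_1 by (intro power_le_one) auto
    also have "1 = moran_dist V W A (Suc n) V"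
      unfolding True by (rule moran_dist_absorbing[symmetric]) simp
    finally show ?thesis .
  next
    case False
    obtain a b where "a \<in> A" "b \<in> V" "b \<notin> A"
      using False Suc.prems(1,2) by auto
    with Suc.prems have "(a, b) \<in> (edges V W)\<^sup>*"
      using strongly_connected by (auto simp: strongly_connected_def)
    then obtain i j where ij: "i \<in> A" "j \<notin> A" "(i, j) \<in> edges V W"
      using rtrancl_exit_edge[OF _ \<open>a \<in> A\<close> \<open>b \<notin> A\<close>] by blast
    then have j: "j \<in> V"
      by (auto simp: edges_def)
    let ?A = "insert j A"
    have A': "?A \<subseteq> V"
      using j Suc.prems by auto
    have "V - ?A = (V - A) - {j}"
      by auto
    then have "card (V - ?A) = card (V - A) - 1"
      using j ij(2) finite_V by simp
    with Suc.prems have "card (V - ?A) \<le> n"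
      by simp
    then have IH: "min_step_prob ^ n \<le> moran_dist V W ?A n V"
      using Suc.IH[OF A'] by simp
    have step: "min_step_prob \<le> moran_dist V W A 1 ?A"
      unfolding moran_dist_1[OF Suc.prems(1)] by (rule min_step_prob_le_moran_trans[OF ij(3,1)])
    have "min_step_prob ^ Suc n \<le> moran_dist V W A 1 ?A * moran_dist V W ?A n V"
      unfolding power_Suc
      by (rule mult_mono[OF step IH moran_dist_nonneg]) (use min_step_prob_pos in simp)
    also have "\<dots> \<le> (\<Sum>A'\<in>Pow V. moran_dist V W A 1 A' * moran_dist V W A' n V)"
      by (intro member_le_sum mult_nonneg_nonneg moran_dist_nonneg) (use A' finite_V in auto)
    also have "\<dots> = moran_dist V W A (Suc n) V"
      by (simp only: moran_dist_add[OF Suc.prems(1), of 1 n, symmetric] plus_1_eq_Suc)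
    finally show ?thesis .
  qed
qed

lemma transient_mass_card_le:
  assumes "A \<in> transient"
  shows "transient_mass A (card V) \<le> 1 - min_step_prob ^ card V"
proof -
  have A: "A \<subseteq> V" "A \<noteq> {}"
    using assms by (auto simp: transient_def)
  have "transient_mass A (card V) \<le> (\<Sum>B\<in>Pow V - {V}. moran_dist V W A (card V) B)"
    unfolding transient_mass_def transient_def
    using finite_V by (intro sum_mono2) (auto simp: moran_dist_nonneg)
  also have "\<dots> = 1 - moran_dist V W A (card V) V"
    using finite_V moran_dist_sum[OF A(1)] by (simp add: sum_diff1)
  also have "\<dots> \<le> 1 - min_step_prob ^ card V"
    using moran_dist_reach_V[OF A] finite_V by (simp add: card_mono)
  finally show ?thesis .
qed

lemma transient_mass_mult_card_le:
  assumes "C \<subseteq> V"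
  shows "transient_mass C (k * card V) \<le> (1 - min_step_prob ^ card V) ^ k"
proof (induction k)
  case 0
  then show ?case
    using transient_mass_le_1[OF assms] by simp
next
  case (Suc k)
  have "transient_mass C (k * card V + card V) \<le> (1 - min_step_prob ^ card V) * transient_mass C (k * card V)"
    using transient_mass_add_le[OF assms] transient_mass_card_le by blast
  also have "\<dots> \<le> (1 - min_step_prob ^ card V) * (1 - min_step_prob ^ card V) ^ k"
    using Suc min_step_prob_pos min_step_prob_le_1 by (intro mult_left_mono) (auto simp: power_le_one)
  finally show ?case
    by (simp add: add.commute)
qed

lemma transient_mass_tendsto_0:
  assumes C: "C \<subseteq> V"
  shows "transient_mass C \<longlonglongrightarrow> 0"
proof (rule LIMSEQ_I)
  fix r :: real assume "0 < r"
  let ?q = "1 - min_step_prob ^ card V"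
  have "norm ?q < 1"
    using min_step_prob_pos min_step_prob_le_1 card_V_pos by (simp add: power_le_one)
  then obtain k where "norm (?q ^ k - 0) < r"
    using LIMSEQ_D[OF LIMSEQ_power_zero \<open>0 < r\<close>] by blast
  then have k: "?q ^ k < r"
    by (simp add: abs_less_iff)
  have "decseq (transient_mass C)"
    using transient_mass_Suc_le[OF C] by (rule decseq_SucI)
  then have "transient_mass C n \<le> transient_mass C (k * card V)" if "k * card V \<le> n" for n
    using that by (rule decseqD)
  then have "transient_mass C n < r" if "k * card V \<le> n" for n
    using that transient_mass_mult_card_le[OF C, of k] k by fastforce
  then show "\<exists>n0. \<forall>n\<ge>n0. norm (transient_mass C n - 0) < r"
    using transient_mass_nonneg by auto
qed

lemma fixation_prob_eq_limit_of_P_vertex: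
  assumes C: "C \<subseteq> V" and i: "i \<in> V" and lim: "(\<lambda>s. P_vertex V W i s C) \<longlonglongrightarrow> p"
  shows "fixation_prob V W C = p"
proof -
  have "(\<lambda>s. P_vertex V W i s C - transient_mass C s) \<longlonglongrightarrow> p - 0"
    by (intro tendsto_diff lim transient_mass_tendsto_0 C)
  then have lower: "(\<lambda>s. P_vertex V W i s C - transient_mass C s) \<longlonglongrightarrow> p"
    by simp
  have "\<forall>s. P_vertex V W i s C - transient_mass C s \<le> P_all V W s C"
    using P_vertex_le_P_all_plus_transient_mass by (simp add: algebra_simps)
  moreover have "\<forall>s. P_all V W s C \<le> P_vertex V W i s C"
    using P_all_le_P_vertex[OF i] by blast
  ultimately have "(\<lambda>s. P_all V W s C) \<longlonglongrightarrow> p"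
    by (intro tendsto_sandwich[OF _ _ lower lim] always_eventually)
  then show ?thesis
    unfolding fixation_prob_def by (rule limI)
qed

end

theorem theorem3:
  fixes V :: "'v set" and W :: "'v \<Rightarrow> 'v \<Rightarrow> real" and C :: "'v set" and t :: nat
  assumes "weight_matrix V W"
    and "strongly_connected V W"
    and "C \<subseteq> V"
    and "\<forall>i\<in>V. \<forall>k\<in>V. P_vertex V W i t C = P_vertex V W k t C"
  shows "\<forall>i\<in>V. P_vertex V W i t C = fixation_prob V W C"
proof
  fix i assume i: "i \<in> V"
  interpret strongly_connected_moran V W
    using assms(1,2) i by unfold_locales auto
  have "\<forall>\<^sub>F s in sequentially. P_vertex V W i s C = P_vertex V W i t C"
    using P_vertex_add_eq_if_uniform[OF assms(4) i]
    by (auto simp: eventually_sequentially dest!: le_Suc_ex)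
  then have "(\<lambda>s. P_vertex V W i s C) \<longlonglongrightarrow> P_vertex V W i t C"
    by (rule tendsto_eventually)
  then show "P_vertex V W i t C = fixation_prob V W C"
    using fixation_prob_eq_limit_of_P_vertex[OF assms(3) i] by simp
qed

end
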